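(* Let $A,B\in\mathbb{C}^{n\times n}$ and let $C=A+B$. Then \[|\Lambda(C)|\leq(\operatorname{rank}(B)+1)\,|\Lambda(A)|+d(A)-d(C).\]
   Context: For $M\in\mathbb{C}^{n\times n}$, $\Lambda(M)$ denotes the set of distinct eigenvalues of $M$ and $|\cdot|$ the cardinality of a set. For $\lambda\in\Lambda(M)$, $m_a(M,\lambda)$ is its algebraic multiplicity (multiplicity as a root of the characteristic polynomial) and $m_g(M,\lambda)$ its geometric multiplicity (dimension of the eigenspace). The defectivity of $M$ is $d(M):=\sum_{\lambda\in\Lambda(M)}\big(m_a(M,\lambda)-m_g(M,\lambda)\big)$. *)

theory Defs
  imports "Jordan_Normal_Form.Jordan_Normal_Form_Uniqueness" "Jordan_Normal_Form.DL_Rank"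
begin

definition spec :: "complex mat \<Rightarrow> complex set" where
  "spec M = {x. eigenvalue M x}"

definition alg_mult :: "complex mat \<Rightarrow> complex \<Rightarrow> nat" where
  "alg_mult M x = Polynomial.order x (char_poly M)"

definition geo_mult :: "complex mat \<Rightarrow> complex \<Rightarrow> nat" where
  "geo_mult M x = kernel_dim (char_matrix M x)"

definition defectivity :: "complex mat \<Rightarrow> int" where
  "defectivity M = (\<Sum>x\<in>spec M. int (alg_mult M x) - int (geo_mult M x))"

end

theory Submission
  imports Defs
begin

text \<open>
  The geometric multiplicity of \<open>\<lambda>\<close> is the nullity of \<open>M - \<lambda>I\<close>, and adding \<open>B\<close> to a matrix
  lowers its nullity by at most \<open>rank B\<close>: the kernel of \<open>X\<close> meets the kernel of \<open>B\<close> inside the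
  kernel of \<open>X + B\<close>, and the rest of it is mapped injectively into the column space of \<open>B\<close>.
  Since the algebraic multiplicities of any \<open>n \<times> n\<close> matrix add up to \<open>n\<close>, we have
  \<open>d(M) = n - \<Sum>\<^sub>\<lambda> m\<^sub>g(M,\<lambda>)\<close>. Each eigenvalue of \<open>A\<close> then has
  \<open>m\<^sub>g(A,\<lambda>) \<le> (rank B + 1) + (m\<^sub>g(C,\<lambda>) - 1)\<close>, where the last term is counted only for
  eigenvalues of \<open>C\<close>; summing over \<open>\<Lambda>(A)\<close> gives the bound.
\<close>

lemma (in vectorspace) fin_dim_subspace:
  assumes fd: "fin_dim" and X: "subspace K X V"
  shows "vectorspace.fin_dim K (vs X)"
proof -
  have vX: "vectorspace K (vs X)" using X subspace_is_vs by blast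
  have subm: "submodule K X V" using X by (simp add: subspace_def)
  let ?P = "\<lambda>S. S \<subseteq> carrier (vs X) \<and> \<not> LinearCombinations.module.lin_dep K (vs X) S"
  have bounded: "finite S \<and> card S \<le> dim" if "?P S" for S
  proof -
    have SX: "S \<subseteq> X" using that by simp
    have "lin_indpt S" using that span_li_not_depend(2)[OF SX subm] by simp
    moreover have "S \<subseteq> carrier V" using SX subm unfolding submodule_def by blast
    ultimately show ?thesis using li_le_dim[OF fd] by blast
  qed
  have "?P {}"
  proof -
    interpret X: vectorspace K "vs X" by (rule vX)
    show ?thesis by (simp add: X.lin_dep_def)
  qed
  from maximal_exists[of ?P dim, OF bounded this]
  obtain S where S: "finite S" "maximal S ?P" by blast
  then have "LinearCombinations.module.gen_set K (vs X) S"
    using vectorspace.max_li_is_gen[OF vX] by blast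
  moreover have "S \<subseteq> carrier (vs X)" using S unfolding maximal_def by blast
  ultimately show ?thesis using S(1) unfolding vectorspace.fin_dim_def[OF vX] by blast
qed

lemma (in vectorspace) dim_subspace_mono:
  assumes fd: "fin_dim" and X: "subspace K X V" and Y: "subspace K Y V" and XY: "X \<subseteq> Y"
  shows "vectorspace.dim K (vs X) \<le> vectorspace.dim K (vs Y)"
proof -
  have vY: "vectorspace K (vs Y)" using Y subspace_is_vs by blast
  have "subspace K X (vs Y)" using nested_subspaces[OF Y X XY] .
  from vectorspace.subspace_dim[OF vY this] fin_dim_subspace[OF fd Y] fin_dim_subspace[OF fd X]
  show ?thesis by simp
qed

lemma mat_kernel_subspace:
  fixes A :: "'a::field mat"
  assumes A: "A \<in> carrier_mat nr n"
  shows "subspace class_ring (mat_kernel A) (module_vec TYPE('a) n)"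
proof -
  interpret V: vec_space "TYPE('a)" n .
  have "A *\<^sub>v 0\<^sub>v n = 0\<^sub>v nr"
    by (rule eq_vecI, insert A, auto simp: scalar_prod_def)
  then show ?thesis
    unfolding subspace_def submodule_def
    using V.vectorspace_axioms vectorspace_def mat_kernel[OF A]
      mult_add_distrib_mat_vec[OF A] mult_mat_vec[OF A]
    by (auto simp: class_ring_simps)
qed

lemma rank_plus_kernel_dim:
  fixes M :: "'a::field mat"
  assumes M: "M \<in> carrier_mat n n"
  shows "vec_space.rank n M + kernel_dim M = n"
proof -
  interpret V: vec_space "TYPE('a)" n .
  interpret KM: kernel n n M by unfold_locales (rule M)
  define T where "T = (\<lambda>v. M *\<^sub>v v)"
  interpret L: linear_map class_ring V.V V.V T
  proof unfold_locales
    show "T \<in> module_hom class_ring V.V V.V"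
      unfolding module_hom_def T_def using M mult_add_distrib_mat_vec[OF M] mult_mat_vec[OF M]
      by (auto simp: class_ring_simps)
  qed
  have rank_nullity:
    "vectorspace.dim class_ring (V.vs L.imT) + vectorspace.dim class_ring (V.vs L.kerT) = n"
    using L.rank_nullity_main(1)[OF V.fin_dim] V.dim_is_n by simp
  have "L.imT = T ` carrier_vec n" by (simp add: L.im_def)
  then have image: "L.imT = V.span (set (cols M))"
    using V.col_space_eq[OF M] M unfolding V.col_space_def T_def by auto
  have kernel: "L.kerT = mat_kernel M"
    unfolding L.ker_def unfolding T_def using mat_kernel[OF M] by auto
  show ?thesis using rank_nullity unfolding image kernel V.rank_def KM.kernel_dim by simp
qed

lemma kernel_dim_eq_0_iff_det:
  fixes M :: "'a::field mat"
  assumes M: "M \<in> carrier_mat n n"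
  shows "kernel_dim M = 0 \<longleftrightarrow> det M \<noteq> 0"
  using rank_plus_kernel_dim[OF M] vec_space.det_rank_iff[OF M] by auto

lemma kernel_dim_le_kernel_dim_add_rank:
  fixes X B :: "'a::field mat"
  assumes X: "X \<in> carrier_mat n n" and B: "B \<in> carrier_mat n n"
  shows "kernel_dim X \<le> kernel_dim (X + B) + vec_space.rank n B"
proof -
  interpret V: vec_space "TYPE('a)" n .
  interpret KX: kernel n n X by unfold_locales (rule X)
  have XB: "X + B \<in> carrier_mat n n" using X B by simp
  interpret KXB: kernel n n "X + B" by unfold_locales (rule XB)
  define T where "T = (\<lambda>v. B *\<^sub>v v)"
  interpret L: linear_map class_ring KX.VK V.V T
  proof unfold_locales
    show "T \<in> module_hom class_ring KX.VK V.V"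
      unfolding module_hom_def T_def
      using B mat_kernel[OF X] mult_add_distrib_mat_vec[OF B] mult_mat_vec[OF B]
      by (auto simp: class_ring_simps)
  qed
  obtain bs where "finite bs" "KX.basis bs" using kernel_basis_exists[OF X] by auto
  then have "KX.Ker.fin_dim" unfolding KX.Ker.fin_dim_def KX.Ker.basis_def by auto
  then have rank_nullity:
    "vectorspace.dim class_ring (V.vs L.imT) + vectorspace.dim class_ring (KX.Ker.vs L.kerT)
      = kernel_dim X"
    using L.rank_nullity_main(1) by simp
  have "L.imT = T ` mat_kernel X" by (simp add: L.im_def)
  then have "L.imT \<subseteq> V.span (set (cols B))"
    using V.col_space_eq[OF B] B mat_kernel[OF X] unfolding V.col_space_def T_def by auto
  then have image_le: "vectorspace.dim class_ring (V.vs L.imT) \<le> vec_space.rank n B"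
    unfolding V.rank_def
    using V.dim_subspace_mono[OF V.fin_dim L.imT_is_subspace V.span_is_subspace] B cols_dim[of B]
    by auto
  have kerT: "L.kerT = mat_kernel X \<inter> mat_kernel B"
    unfolding L.ker_def unfolding T_def using mat_kernel[OF X] mat_kernel[OF B] by auto
  have "subspace class_ring (mat_kernel X \<inter> mat_kernel B) V.V"
    using mat_kernel_subspace[OF X] mat_kernel_subspace[OF B]
    unfolding subspace_def submodule_def by auto
  moreover have "mat_kernel X \<inter> mat_kernel B \<subseteq> mat_kernel (X + B)"
    using mat_kernel[OF X] mat_kernel[OF B] mat_kernel[OF XB] add_mult_distrib_mat_vec[OF X B]
    by auto
  ultimately have kernel_le: "vectorspace.dim class_ring (KX.Ker.vs L.kerT) \<le> kernel_dim (X + B)"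
    unfolding kerT KXB.kernel_dim
    using V.dim_subspace_mono[OF V.fin_dim _ mat_kernel_subspace[OF XB]] by simp
  show ?thesis using rank_nullity image_le kernel_le by linarith
qed

lemma order_prod_linear_factors:
  fixes as :: "'a::idom list"
  shows "Polynomial.order x (\<Prod>a\<leftarrow>as. [:-a,1:]) = count (mset as) x"
proof -
  have "Polynomial.order x [:-a,1:] = (if a = x then 1 else 0)" for a :: 'a
    using order_linear'[of x "-a"] by simp
  then show ?thesis
    by (subst order_prod_list) (auto, induction as, auto)
qed

lemma finite_spec_sum_alg_mult:
  assumes M: "M \<in> carrier_mat n n"
  shows "finite (spec M)" and "(\<Sum>x\<in>spec M. alg_mult M x) = n"
proof -
  obtain as where as: "char_poly M = (\<Prod>a\<leftarrow>as. [:-a,1:])" "length as = n"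
    using char_poly_factorized[OF M] by blast
  have "spec M = {x. poly (char_poly M) x = 0}"
    unfolding spec_def using eigenvalue_root_char_poly[OF M] by auto
  also have "\<dots> = set as"
    unfolding as(1) poly_prod_list by (auto simp: prod_list_zero_iff)
  finally have spec_eq: "spec M = set_mset (mset as)" by simp
  show "finite (spec M)" unfolding spec_eq by simp
  show "(\<Sum>x\<in>spec M. alg_mult M x) = n"
    unfolding alg_mult_def as(1) order_prod_linear_factors spec_eq
    using as(2) size_multiset_overloaded_eq[of "mset as"] by simp
qed

lemma geo_mult_eq_0_iff:
  assumes M: "M \<in> carrier_mat n n"
  shows "geo_mult M x = 0 \<longleftrightarrow> x \<notin> spec M"
  unfolding geo_mult_def spec_def
  using kernel_dim_eq_0_iff_det[OF char_matrix_closed[OF M]] eigenvalue_det[OF M] by auto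

lemma defectivity_eq_dim_minus_sum_geo_mult:
  assumes M: "M \<in> carrier_mat n n"
  shows "defectivity M = int n - (\<Sum>x\<in>spec M. int (geo_mult M x))"
  using finite_spec_sum_alg_mult[OF M]
  unfolding defectivity_def by (simp add: sum_subtractf flip: of_nat_sum)

lemma char_matrix_add:
  assumes A: "A \<in> carrier_mat n n" and B: "B \<in> carrier_mat n n"
  shows "char_matrix (A + B) x = char_matrix A x + B"
  unfolding char_matrix_def using A B by (intro eq_matI) auto

lemma geo_mult_le_geo_mult_add_rank:
  assumes A: "A \<in> carrier_mat n n" and B: "B \<in> carrier_mat n n"
  shows "geo_mult A x \<le> geo_mult (A + B) x + vec_space.rank n B"
  unfolding geo_mult_def char_matrix_add[OF A B]
  by (rule kernel_dim_le_kernel_dim_add_rank[OF char_matrix_closed[OF A] B])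

lemma sum_le_card_plus_excess:
  fixes f g :: "'a \<Rightarrow> int"
  assumes S: "finite S" and T: "finite T"
    and f_le: "\<And>x. f x \<le> g x + r"
    and g_pos: "\<And>x. x \<in> T \<Longrightarrow> g x \<ge> 1"
    and g_zero: "\<And>x. x \<notin> T \<Longrightarrow> g x = 0"
  shows "(\<Sum>x\<in>S. f x) \<le> (r + 1) * int (card S) + ((\<Sum>x\<in>T. g x) - int (card T))"
proof -
  have "(\<Sum>x\<in>S. f x) \<le> (\<Sum>x\<in>S. (r + 1) + (if x \<in> T then g x - 1 else 0))"
    using f_le g_zero by (intro sum_mono) (smt (verit))
  also have "\<dots> = (r + 1) * int (card S) + (\<Sum>x\<in>S \<inter> T. g x - 1)"
    using S by (simp add: sum.distrib sum.inter_restrict)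
  also have "(\<Sum>x\<in>S \<inter> T. g x - 1) \<le> (\<Sum>x\<in>T. g x - 1)"
    using T by (intro sum_mono2) (auto dest: g_pos)
  also have "\<dots> = (\<Sum>x\<in>T. g x) - int (card T)"
    by (simp add: sum_subtractf)
  finally show ?thesis by simp
qed

theorem theorem3p1:
  fixes A B :: "complex mat" and n :: nat
  assumes "A \<in> carrier_mat n n" and "B \<in> carrier_mat n n"
  shows "int (card (spec (A + B)))
           \<le> (int (vec_space.rank n B) + 1) * int (card (spec A))
              + defectivity A - defectivity (A + B)"
proof -
  have C: "A + B \<in> carrier_mat n n" using assms by simp
  have "(\<Sum>x\<in>spec A. int (geo_mult A x))
      \<le> (int (vec_space.rank n B) + 1) * int (card (spec A))
        + ((\<Sum>x\<in>spec (A + B). int (geo_mult (A + B) x)) - int (card (spec (A + B))))"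
  proof (rule sum_le_card_plus_excess)
    show "finite (spec A)" "finite (spec (A + B))"
      using finite_spec_sum_alg_mult(1) assms C by blast+
    show "int (geo_mult A x) \<le> int (geo_mult (A + B) x) + int (vec_space.rank n B)" for x
      using geo_mult_le_geo_mult_add_rank[OF assms] by (simp flip: of_nat_add)
    show "x \<in> spec (A + B) \<Longrightarrow> 1 \<le> int (geo_mult (A + B) x)"
      and "x \<notin> spec (A + B) \<Longrightarrow> int (geo_mult (A + B) x) = 0" for x
      using geo_mult_eq_0_iff[OF C, of x] by auto
  qed
  then show ?thesis
    unfolding defectivity_eq_dim_minus_sum_geo_mult[OF assms(1)]
      defectivity_eq_dim_minus_sum_geo_mult[OF C]
    by simp
qed

end
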